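(* Let $n,k$ be integers with $1\leq k\leq n-1$. Let $a\in\mathbb{Z}^n$ and $\alpha\in\mathbb{Z}$ be such that $ax\geq\alpha$ is a facet defining inequality of $Q(C_n^k)$ which is neither (a positive multiple of) a boolean facet nor (a positive multiple of) the rank constraint. Put $a^0=\min\{a_i:i\in\mathbb{Z}_n\}$, $W=\{i\in\mathbb{Z}_n:a_i>a^0\}$ and $\overline W=\mathbb{Z}_n\setminus W$. Then 1. $|C^i\cap\overline W|\geq 2$ for every $i\in\mathbb{Z}_n$; 2. $a_i\leq 2a^0$ for every $i\in W$.
   Context: $\mathbb{Z}_n=\{0,\dots,n-1\}$ with addition modulo $n$; $[a,b)_n$ denotes the $\mathbb{Z}_n$-cyclic interval from $a$ (included) to $b$ (excluded). For $i\in\mathbb{Z}_n$, $C^i=[i,i+k)_n$, and $C_n^k$ is the $n\times n$ $0,1$ matrix whose $i$-th row is the incidence vector of $C^i$. A cover of $C_n^k$ is $x\in\{0,1\}^n$ with $C_n^kx\geq\mathbf 1$; $Q(C_n^k)$ is the convex hull of the covers. The boolean facets are $x_i\geq0$, $x_i\leq1$, $\sum_{j\in C^i}x_j\geq1$ ($i\in\mathbb{Z}_n$); the rank constraint is $\sum_{i\in\mathbb{Z}_n}x_i\geq\lceil n/k\rceil$. *)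

theory Defs
  imports "HOL-Analysis.Analysis"
begin

text \<open>Coordinates of R^n are indexed by a finite type 'n with CARD('n) = n;
  a bijection idx : 'n -> {0..<n} identifies the index type with Z_n.\<close>

definition is_labelling :: "('n::finite \<Rightarrow> nat) \<Rightarrow> bool" where
  "is_labelling idx \<longleftrightarrow> bij_betw idx (UNIV::'n set) {..<CARD('n)}"

text \<open>Cyclic interval C^i = [i, i+k)_n.\<close>
definition cycC :: "('n::finite \<Rightarrow> nat) \<Rightarrow> nat \<Rightarrow> 'n \<Rightarrow> 'n set" where
  "cycC idx k i = {j. (idx j + CARD('n) - idx i) mod CARD('n) < k}"

definition is_cover :: "('n::finite \<Rightarrow> nat) \<Rightarrow> nat \<Rightarrow> real^'n \<Rightarrow> bool" where
  "is_cover idx k x \<longleftrightarrow> (\<forall>j. x$j = 0 \<or> x$j = 1) \<and> (\<forall>i. (\<Sum>j\<in>cycC idx k i. x$j) \<ge> 1)"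

definition Qcov :: "('n::finite \<Rightarrow> nat) \<Rightarrow> nat \<Rightarrow> (real^'n) set" where
  "Qcov idx k = convex hull {x. is_cover idx k x}"

definition lhs :: "int^'n \<Rightarrow> real^'n \<Rightarrow> real" where
  "lhs a x = (\<Sum>j\<in>UNIV. real_of_int (a$j) * x$j)"

definition facet_defining :: "(real^'n) set \<Rightarrow> int^'n \<Rightarrow> int \<Rightarrow> bool" where
  "facet_defining P a \<alpha> \<longleftrightarrow> (\<forall>x\<in>P. lhs a x \<ge> real_of_int \<alpha>)
      \<and> {x\<in>P. lhs a x = real_of_int \<alpha>} facet_of P"

definition pos_multiple :: "int^'n \<Rightarrow> int \<Rightarrow> (real^'n) \<Rightarrow> real \<Rightarrow> bool" where
  "pos_multiple a \<alpha> b \<beta> \<longleftrightarrow> (\<exists>c>0. (\<forall>j. real_of_int (a$j) = c * b$j) \<and> real_of_int \<alpha> = c * \<beta>)"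

definition is_boolean_facet :: "('n::finite \<Rightarrow> nat) \<Rightarrow> nat \<Rightarrow> int^'n \<Rightarrow> int \<Rightarrow> bool" where
  "is_boolean_facet idx k a \<alpha> \<longleftrightarrow> (\<exists>i.
      pos_multiple a \<alpha> (\<chi> j. if j = i then 1 else 0) 0
    \<or> pos_multiple a \<alpha> (\<chi> j. if j = i then -1 else 0) (-1)
    \<or> pos_multiple a \<alpha> (\<chi> j. if j \<in> cycC idx k i then 1 else 0) 1)"

definition is_rank_constraint :: "nat \<Rightarrow> int^'n::finite \<Rightarrow> int \<Rightarrow> bool" where
  "is_rank_constraint k a \<alpha> \<longleftrightarrow>
     pos_multiple a \<alpha> (\<chi> j. 1) (of_int \<lceil>real CARD('n) / real k\<rceil>)"

end

theory Submission
  imports Defs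
begin

text \<open>
  Since Q(C_n^k) is full-dimensional, the facet a x \<ge> \<alpha> is determined up to scaling by its
  tight covers, the covers S with a(S) = \<alpha>. If all tight covers met a set C in the same number
  of elements, a would be a multiple of the indicator vector of C; for C = {j} and for a window
  C = C^i this makes the inequality boolean or invalid. Hence every j lies in some tight cover and
  outside another one (so a \<ge> 0), and every window contains two elements of some tight cover.

  Replacing an element x of a tight cover S by a set R that meets every window in which x is the
  only element of S gives a cover, so a_x \<le> a(R). With R a single element this shows that every
  window contains two positions of minimal weight a^0. For i \<in> W, the windows in which i is the
  only element of a tight cover can always be met by two positions of weight a^0, so a_i \<le> 2 a^0.
\<close>

lemma hyperplane_subset_multiple:
  fixes c b :: "'a::euclidean_space"
  assumes c: "c \<noteq> 0" and sub: "{x. c \<bullet> x = d} \<subseteq> {x. b \<bullet> x = e}"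
  obtains l where "b = l *\<^sub>R c" "e = l * d"
proof -
  define l where "l = (b \<bullet> c) / (c \<bullet> c)"
  define h where "h = (d / (c \<bullet> c)) *\<^sub>R c"
  define u where "u = b - l *\<^sub>R c"
  have cc: "c \<bullet> c \<noteq> 0" using c by simp
  have ch: "c \<bullet> h = d" and cu: "c \<bullet> u = 0"
    using cc by (simp_all add: h_def u_def l_def inner_diff_right inner_commute)
  then have "c \<bullet> (h + u) = d"
    by (simp add: inner_add_right)
  then have "b \<bullet> h = e" "b \<bullet> (h + u) = e"
    using sub ch by blast+
  then have "b \<bullet> u = 0"
    by (simp add: inner_add_right)
  then have "u \<bullet> u = 0"
    using cu by (simp add: u_def inner_diff_left)
  then have "b = l *\<^sub>R c"
    by (simp add: u_def)
  moreover from this have "e = l * d"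
    using \<open>b \<bullet> h = e\<close> ch by simp
  ultimately show ?thesis by (rule that)
qed

lemma affine_hull_eq_UNIV_if_minus_Basis:
  fixes S :: "'a::euclidean_space set"
  assumes "p \<in> S" and "\<And>b. b \<in> Basis \<Longrightarrow> p - b \<in> S"
  shows "affine hull S = UNIV"
proof -
  define D where "D = (\<lambda>x. - p + x) ` (S - {p})"
  have "b \<in> span D" if "b \<in> Basis" for b
  proof -
    have "p - b \<in> S - {p}"
      using assms(2) that nonzero_Basis by fastforce
    then have "- b \<in> D"
      unfolding D_def by (force intro: image_eqI[of _ _ "p - b"])
    then show ?thesis
      using span_neg[OF span_base[of "- b" D]] by simp
  qed
  then have "span D = UNIV"
    by (metis span_Basis span_minimal subspace_span subsetI top.extremum_uniqueI)
  then show ?thesis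
    using affine_hull_span2[OF assms(1)] unfolding D_def by (auto intro: image_eqI[of _ _ "x - p" for x])
qed

lemma facet_of_convex_hull_equation_multiple:
  fixes V :: "'a::euclidean_space set"
  assumes "finite V" and full: "affine hull V = UNIV"
    and facet: "{x \<in> convex hull V. c \<bullet> x = d} facet_of convex hull V"
    and tight: "\<And>v. v \<in> V \<Longrightarrow> c \<bullet> v = d \<Longrightarrow> b \<bullet> v = e"
  obtains l where "b = l *\<^sub>R c" "e = l * d"
proof -
  define F where "F = {x \<in> convex hull V. c \<bullet> x = d}"
  have "c \<noteq> 0"
  proof
    assume "c = 0"
    then have "F = convex hull V \<or> F = {}"
      unfolding F_def by auto
    then show False
      using facet unfolding F_def[symmetric] facet_of_def by auto
  qed
  obtain V' where "V' \<subseteq> V" and F: "F = convex hull V'"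
    using face_of_convex_hull_subset[OF finite_imp_compact[OF \<open>finite V\<close>]]
      facet_of_imp_face_of[OF facet] unfolding F_def[symmetric] by blast
  have "V' \<subseteq> F"
    unfolding F by (rule hull_subset)
  then have "V' \<subseteq> {x. b \<bullet> x = e}"
    using \<open>V' \<subseteq> V\<close> tight unfolding F_def by blast
  then have Fb: "F \<subseteq> {x. b \<bullet> x = e}"
    unfolding F by (intro hull_minimal convex_hyperplane)
  have "aff_dim F = DIM('a) - 1"
    using facet full unfolding F_def[symmetric] facet_of_def
    by (simp add: aff_dim_convex_hull aff_dim_eq_full[symmetric])
  then obtain c' d' where "c' \<noteq> 0" and hull: "affine hull F = {x. c' \<bullet> x = d'}"
    using aff_dim_eq_hyperplane by blast
  have "F \<subseteq> {x. c \<bullet> x = d}"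
    unfolding F_def by blast
  with Fb have "affine hull F \<subseteq> {x. c \<bullet> x = d}" "affine hull F \<subseteq> {x. b \<bullet> x = e}"
    by (simp_all add: hull_minimal affine_hyperplane)
  then obtain l1 l2 where "c = l1 *\<^sub>R c'" "d = l1 * d'" "b = l2 *\<^sub>R c'" "e = l2 * d'"
    unfolding hull by (metis hyperplane_subset_multiple \<open>c' \<noteq> 0\<close>)
  moreover from this have "l1 \<noteq> 0"
    using \<open>c \<noteq> 0\<close> by auto
  ultimately show ?thesis
    by (intro that[of "l2 / l1"]) simp_all
qed

locale labelling =
  fixes idx :: "'n::finite \<Rightarrow> nat"
  assumes labelling: "is_labelling idx"
begin

(* Integers model Z_n: pos t is the element labelled t mod n, so that C^i is the image of an
   integer interval (cycC_pos) and window arguments can use the order of int. *)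
definition pos :: "int \<Rightarrow> 'n" where
  "pos t = inv idx (nat (t mod int CARD('n)))"

lemma pos_eq_iff: "pos t = j \<longleftrightarrow> t mod int CARD('n) = int (idx j)"
proof -
  have bij: "bij_betw idx UNIV {..<CARD('n)}"
    using labelling unfolding is_labelling_def .
  have "nat (t mod int CARD('n)) \<in> {..<CARD('n)}"
    by (simp add: nat_less_iff)
  then have "idx (pos t) = nat (t mod int CARD('n))"
    unfolding pos_def using bij by (simp add: bij_betw_inv_into_right)
  then show ?thesis
    using bij_betw_imp_inj_on[OF bij] by (auto dest: injD)
qed

lemma idx_less: "idx j < CARD('n)"
  using labelling bij_betwE unfolding is_labelling_def by blast

lemma pos_idx [simp]: "pos (int (idx j)) = j"
  using idx_less[of j] by (simp add: pos_eq_iff)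

lemma pos_eq_pos_iff: "pos s = pos t \<longleftrightarrow> s mod int CARD('n) = t mod int CARD('n)"
  using pos_eq_iff[of s "pos t"] pos_eq_iff[of t "pos t"] by simp

lemma pos_add_period [simp]: "pos (t + c * int CARD('n)) = pos t"
  by (simp add: pos_eq_pos_iff)

lemma pos_eq_posE:
  assumes "pos s = pos t"
  obtains c where "s = t + c * int CARD('n)"
proof
  have "s mod int CARD('n) = t mod int CARD('n)"
    using assms by (simp add: pos_eq_pos_iff)
  moreover have "s = s div int CARD('n) * int CARD('n) + s mod int CARD('n)"
    and "t = t div int CARD('n) * int CARD('n) + t mod int CARD('n)"
    by simp_all
  ultimately show "s = t + (s div int CARD('n) - t div int CARD('n)) * int CARD('n)"
    unfolding left_diff_distrib by linarith
qed

lemma pos_neq: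
  assumes "t < s" "s < t + int CARD('n)"
  shows "pos s \<noteq> pos t"
proof
  assume "pos s = pos t"
  then obtain c where c: "s = t + c * int CARD('n)"
    by (rule pos_eq_posE)
  have "0 < c"
    using assms(1) c by (simp add: zero_less_mult_iff)
  moreover have "c < 1"
    using assms(2) c mult_less_cancel_right[of c "int CARD('n)" 1] by simp
  ultimately show False by simp
qed

lemma pos_in_period: "\<exists>s. t \<le> s \<and> s < t + int CARD('n) \<and> pos s = j"
proof (intro exI conjI)
  show "pos (t + (int (idx j) - t) mod int CARD('n)) = j"
    using idx_less[of j] by (simp add: pos_eq_iff mod_add_right_eq)
qed simp_all

end

locale cyclic_windows = labelling idx for idx :: "'n::finite \<Rightarrow> nat" +
  fixes k :: nat
  assumes k_pos: "1 \<le> k" and k_less: "k < CARD('n)"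
begin

lemma mem_cycC_pos_iff:
  "j \<in> cycC idx k (pos t) \<longleftrightarrow> (int (idx j) - t) mod int CARD('n) < int k"
proof -
  have "int (idx (pos t)) = t mod int CARD('n)"
    using pos_eq_iff[of t "pos t"] by simp
  then have "int ((idx j + CARD('n) - idx (pos t)) mod CARD('n))
      = (int (idx j) + int CARD('n) - t mod int CARD('n)) mod int CARD('n)"
    using idx_less[of "pos t"] by (simp add: zmod_int of_nat_diff)
  also have "\<dots> = (int (idx j) - t + int CARD('n)) mod int CARD('n)"
    by (simp add: mod_diff_right_eq diff_add_eq)
  also have "\<dots> = (int (idx j) - t) mod int CARD('n)"
    by (rule mod_add_self2)
  finally have eq: "int ((idx j + CARD('n) - idx (pos t)) mod CARD('n))
      = (int (idx j) - t) mod int CARD('n)" .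
  have "j \<in> cycC idx k (pos t) \<longleftrightarrow> int ((idx j + CARD('n) - idx (pos t)) mod CARD('n)) < int k"
    unfolding cycC_def by simp
  then show ?thesis
    by (simp only: eq)
qed

lemma cycC_pos: "cycC idx k (pos t) = pos ` {t..<t + int k}"
proof -
  have "(int (idx j) - t) mod int CARD('n) < int k \<longleftrightarrow> j \<in> pos ` {t..<t + int k}" for j
  proof
    assume "(int (idx j) - t) mod int CARD('n) < int k"
    moreover have "pos (t + (int (idx j) - t) mod int CARD('n)) = j"
      using idx_less[of j] by (simp add: pos_eq_iff mod_add_right_eq)
    ultimately show "j \<in> pos ` {t..<t + int k}"
      by (intro image_eqI[of _ _ "t + (int (idx j) - t) mod int CARD('n)"]) simp_all
  next
    assume "j \<in> pos ` {t..<t + int k}"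
    then obtain s where s: "t \<le> s" "s < t + int k" "pos s = j"
      by auto
    then have "(int (idx j) - t) mod int CARD('n) = (s - t) mod int CARD('n)"
      using mod_diff_left_eq[of s "int CARD('n)" t] by (simp add: pos_eq_iff)
    also have "\<dots> = s - t"
      using s k_less by (intro mod_pos_pos_trivial) simp_all
    finally show "(int (idx j) - t) mod int CARD('n) < int k"
      using s by simp
  qed
  then show ?thesis
    using mem_cycC_pos_iff by blast
qed

definition hits :: "'n set \<Rightarrow> int \<Rightarrow> bool" where
  "hits S t \<longleftrightarrow> (\<exists>j. t \<le> j \<and> j < t + int k \<and> pos j \<in> S)"

definition covers :: "'n set \<Rightarrow> bool" where
  "covers S \<longleftrightarrow> (\<forall>t. hits S t)"

lemma hits_iff_cycC: "hits S t \<longleftrightarrow> cycC idx k (pos t) \<inter> S \<noteq> {}"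
  unfolding hits_def cycC_pos by fastforce

lemma hits_add_period [simp]: "hits S (t + c * int CARD('n)) \<longleftrightarrow> hits S t"
  by (simp add: hits_iff_cycC)

lemma hitsI: "t \<le> j \<Longrightarrow> j < t + int k \<Longrightarrow> pos j \<in> S \<Longrightarrow> hits S t"
  unfolding hits_def by blast

lemma hits_mono: "hits S t \<Longrightarrow> S \<subseteq> T \<Longrightarrow> hits T t"
  unfolding hits_def by blast

lemma covers_iff_cycC: "covers S \<longleftrightarrow> (\<forall>i. cycC idx k i \<inter> S \<noteq> {})"
  unfolding covers_def hits_iff_cycC by (metis pos_idx)

definition incidence :: "'n set \<Rightarrow> real^'n" where
  "incidence S = (\<chi> j. if j \<in> S then 1 else 0)"

lemma sum_incidence: "(\<Sum>j\<in>A. incidence S $ j) = real (card (A \<inter> S))"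
  by (simp add: incidence_def sum.If_cases Int_commute)

lemma is_cover_iff: "is_cover idx k x \<longleftrightarrow> (\<exists>S. x = incidence S \<and> covers S)"
proof
  assume x: "is_cover idx k x"
  define S where "S = {j. x $ j = 1}"
  have "x = incidence S"
    using x by (auto simp: is_cover_def incidence_def vec_eq_iff S_def)
  moreover have "cycC idx k i \<inter> S \<noteq> {}" for i
  proof -
    have "1 \<le> (\<Sum>j\<in>cycC idx k i. x $ j)"
      using x unfolding is_cover_def by blast
    then have "card (cycC idx k i \<inter> S) \<noteq> 0"
      unfolding \<open>x = incidence S\<close> sum_incidence by linarith
    then show ?thesis by force
  qed
  ultimately show "\<exists>S. x = incidence S \<and> covers S"
    unfolding covers_iff_cycC by blast
next
  assume "\<exists>S. x = incidence S \<and> covers S"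
  then obtain S where S: "x = incidence S" "covers S" by blast
  have "1 \<le> (\<Sum>j\<in>cycC idx k i. x $ j)" for i
  proof -
    have "cycC idx k i \<inter> S \<noteq> {}"
      using S(2) unfolding covers_iff_cycC by blast
    then show ?thesis
      unfolding S(1) sum_incidence by (simp add: Suc_le_eq card_gt_0_iff)
  qed
  then show "is_cover idx k x"
    unfolding is_cover_def S(1) by (simp add: incidence_def)
qed

lemma finite_covers: "finite {x. is_cover idx k x}"
  by (rule finite_subset[of _ "range incidence"]) (auto simp: is_cover_iff)

lemma inner_incidence: "incidence C \<bullet> x = (\<Sum>j\<in>C. x $ j)"
proof -
  have "incidence C \<bullet> x = (\<Sum>i\<in>UNIV. if i \<in> C then x $ i else 0)"
    unfolding inner_vec_def incidence_def by (rule sum.cong) simp_all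
  then show ?thesis
    by (simp add: sum.If_cases)
qed

lemma covers_UNIV: "covers UNIV"
proof -
  have "hits UNIV t" for t
    using k_pos by (intro hitsI[of t t]) simp_all
  then show ?thesis
    unfolding covers_def ..
qed

lemma card_inter_cycC_eq_1:
  assumes "hits S t"
    and single: "\<And>j1 j2. t \<le> j1 \<Longrightarrow> j1 < j2 \<Longrightarrow> j2 < t + int k \<Longrightarrow>
      pos j1 \<in> S \<Longrightarrow> pos j2 \<in> S \<Longrightarrow> False"
  shows "card (S \<inter> cycC idx k (pos t)) = 1"
proof -
  obtain j where j: "t \<le> j" "j < t + int k" "pos j \<in> S"
    using assms(1) unfolding hits_def by blast
  have "x = pos j" if x: "x \<in> S \<inter> cycC idx k (pos t)" for x
  proof -
    obtain j' where j': "t \<le> j'" "j' < t + int k" "x = pos j'" "pos j' \<in> S"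
      using x unfolding cycC_pos by auto
    then have "\<not> j < j'" "\<not> j' < j"
      using single j by blast+
    then show ?thesis
      using j' by simp
  qed
  moreover have "pos j \<in> S \<inter> cycC idx k (pos t)"
    using j unfolding cycC_pos by auto
  ultimately have "S \<inter> cycC idx k (pos t) = {pos j}"
    by blast
  then show ?thesis by simp
qed

lemma two_le_card_cycC:
  assumes "2 \<le> k"
  shows "2 \<le> card (cycC idx k (pos t))"
proof -
  have "pos (t + 1) \<noteq> pos t"
    using k_less assms by (intro pos_neq) simp_all
  moreover have "{pos t, pos (t + 1)} \<subseteq> cycC idx k (pos t)"
    using assms unfolding cycC_pos by auto
  ultimately show ?thesis
    using card_mono[of "cycC idx k (pos t)" "{pos t, pos (t + 1)}"] by simp
qed

end

locale nonboolean_facet = cyclic_windows idx k for idx :: "'n::finite \<Rightarrow> nat" and k +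
  fixes a :: "int^'n" and \<alpha> :: int
  assumes facet_defining: "facet_defining (Qcov idx k) a \<alpha>"
    and not_boolean: "\<not> is_boolean_facet idx k a \<alpha>"
begin

definition weight :: "'n set \<Rightarrow> int" where
  "weight S = (\<Sum>j\<in>S. a $ j)"

definition tight :: "'n set \<Rightarrow> bool" where
  "tight S \<longleftrightarrow> covers S \<and> weight S = \<alpha>"

lemma lhs_incidence: "lhs a (incidence S) = real_of_int (weight S)"
  by (simp add: lhs_def incidence_def weight_def if_distrib sum.If_cases)

lemma weight_ge_if_covers: "covers S \<Longrightarrow> \<alpha> \<le> weight S"
proof -
  assume "covers S"
  then have "incidence S \<in> Qcov idx k"
    unfolding Qcov_def by (intro hull_inc) (auto simp: is_cover_iff)
  then have "real_of_int \<alpha> \<le> lhs a (incidence S)"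
    using facet_defining by (auto simp: facet_defining_def)
  then show "\<alpha> \<le> weight S"
    by (simp add: lhs_incidence)
qed

lemma weight_insert: "j \<notin> S \<Longrightarrow> weight (insert j S) = a $ j + weight S"
  by (simp add: weight_def)

lemma weight_Diff_singleton: "j \<in> S \<Longrightarrow> weight (S - {j}) = weight S - a $ j"
  by (simp add: weight_def sum_diff1)

lemma weight_multiple_indicator:
  assumes "\<And>j. real_of_int (a $ j) = c * (if j \<in> C then 1 else 0)"
  shows "real_of_int (weight S) = c * real (card (S \<inter> C))"
  by (simp add: weight_def assms sum.If_cases Int_commute flip: sum_distrib_left)

lemma two_le_k: "2 \<le> k"
proof (rule ccontr)
  assume "\<not> 2 \<le> k"
  then have "k = 1"
    using k_pos by simp
  have "S = UNIV" if "covers S" for S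
  proof -
    have "j \<in> S" for j
    proof -
      obtain j' where "int (idx j) \<le> j'" "j' < int (idx j) + 1" "pos j' \<in> S"
        using \<open>covers S\<close> \<open>k = 1\<close> unfolding covers_def hits_def by fastforce
      then show ?thesis
        by (metis pos_idx order_antisym zless_add1_eq order.strict_iff_order)
    qed
    then show ?thesis by blast
  qed
  then have "{x. is_cover idx k x} = {incidence UNIV}"
    using covers_UNIV by (auto simp: is_cover_iff)
  then have "Qcov idx k = {incidence UNIV}"
    by (simp add: Qcov_def)
  moreover have "{x \<in> Qcov idx k. lhs a x = real_of_int \<alpha>} facet_of Qcov idx k"
    using facet_defining by (simp add: facet_defining_def)
  ultimately show False
    by (metis (no_types, lifting) facet_of_def facet_of_imp_subset facet_of_irrefl subset_singleton_iff)
qed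

lemma covers_Compl_singleton: "covers (- {j})"
  unfolding covers_def
proof
  fix t
  have "pos (t + 1) \<noteq> pos t"
    using k_less two_le_k by (intro pos_neq) simp_all
  show "hits (- {j}) t"
  proof (cases "pos t = j")
    case True
    then show ?thesis
      using \<open>pos (t + 1) \<noteq> pos t\<close> two_le_k by (intro hitsI[of t "t + 1"]) auto
  next
    case False
    then show ?thesis
      using two_le_k by (intro hitsI[of t t]) auto
  qed
qed

lemma affine_hull_covers: "affine hull {x. is_cover idx k x} = UNIV"
proof (rule affine_hull_eq_UNIV_if_minus_Basis)
  show "incidence UNIV \<in> {x. is_cover idx k x}"
    using covers_UNIV by (auto simp: is_cover_iff)
  fix b :: "real^'n"
  assume "b \<in> Basis"
  then obtain j where "b = axis j 1"
    by (auto simp: Basis_vec_def)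
  then have "incidence UNIV - b = incidence (- {j})"
    by (simp add: incidence_def axis_def vec_eq_iff)
  then show "incidence UNIV - b \<in> {x. is_cover idx k x}"
    using covers_Compl_singleton by (auto simp: is_cover_iff)
qed

(* Full-dimensionality of Q makes the facet equation unique up to scaling. *)
lemma tight_card_const_imp_indicator:
  assumes "C \<noteq> {}" and card: "\<And>S. tight S \<Longrightarrow> card (S \<inter> C) = m"
  obtains c where "c \<noteq> 0" "\<And>j. real_of_int (a $ j) = c * (if j \<in> C then 1 else 0)"
    "real_of_int \<alpha> = c * real m"
proof -
  define ar :: "real^'n" where "ar = (\<chi> j. real_of_int (a $ j))"
  have lhs_ar: "lhs a x = ar \<bullet> x" for x
    by (simp add: lhs_def ar_def inner_vec_def)
  have "{x \<in> convex hull {x. is_cover idx k x}. ar \<bullet> x = real_of_int \<alpha>}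
      facet_of convex hull {x. is_cover idx k x}"
    using facet_defining by (simp add: facet_defining_def Qcov_def lhs_ar)
  moreover have "incidence C \<bullet> v = real m"
    if v: "v \<in> {x. is_cover idx k x}" "ar \<bullet> v = real_of_int \<alpha>" for v
  proof -
    obtain S where S: "v = incidence S" "covers S"
      using v(1) is_cover_iff by blast
    then have "tight S"
      using v(2) by (simp add: tight_def lhs_incidence flip: lhs_ar)
    then show ?thesis
      using card[of S] by (simp add: S(1) inner_incidence sum_incidence Int_commute)
  qed
  ultimately obtain l where l: "incidence C = l *\<^sub>R ar" "real m = l * real_of_int \<alpha>"
    using facet_of_convex_hull_equation_multiple[OF finite_covers affine_hull_covers] by blast
  have l_nth: "(if j \<in> C then 1 else 0) = l * real_of_int (a $ j)" for j
    using arg_cong[OF l(1), of "\<lambda>v. v $ j"] by (simp add: incidence_def ar_def)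
  obtain j0 where "j0 \<in> C"
    using assms(1) by blast
  then have "l \<noteq> 0"
    using l_nth[of j0] by auto
  show ?thesis
  proof (rule that[of "1 / l"])
    fix j
    show "real_of_int (a $ j) = 1 / l * (if j \<in> C then 1 else 0)"
      using l_nth[of j] \<open>l \<noteq> 0\<close> by (simp add: field_simps)
  qed (use l(2) \<open>l \<noteq> 0\<close> in simp_all)
qed

lemma exists_tight_mem: "\<exists>S. tight S \<and> j \<in> S"
proof (rule ccontr)
  assume "\<not> ?thesis"
  then have "card (S \<inter> {j}) = 0" if "tight S" for S
    using that by auto
  then obtain c where "c \<noteq> 0"
    and a_eq: "\<And>i. real_of_int (a $ i) = c * (if i \<in> {j} then 1 else 0)"
    and "real_of_int \<alpha> = c * real 0"
    using tight_card_const_imp_indicator[of "{j}" 0] by blast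
  then have "\<alpha> = 0"
    by simp
  show False
  proof (cases "0 < c")
    case True
    then have "pos_multiple a \<alpha> (\<chi> i. if i = j then 1 else 0) 0"
      using a_eq \<open>\<alpha> = 0\<close> unfolding pos_multiple_def by (intro exI[of _ c]) auto
    then show False
      using not_boolean unfolding is_boolean_facet_def by blast
  next
    case False
    have "real_of_int (weight UNIV) = c"
      using weight_multiple_indicator[OF a_eq, of UNIV] by simp
    then show False
      using weight_ge_if_covers[OF covers_UNIV] \<open>\<alpha> = 0\<close> \<open>c \<noteq> 0\<close> False by linarith
  qed
qed

lemma exists_tight_not_mem: "\<exists>S. tight S \<and> j \<notin> S"
proof (rule ccontr)
  assume "\<not> ?thesis"
  then have "card (S \<inter> {j}) = 1" if "tight S" for S
    using that by auto
  then obtain c where "c \<noteq> 0"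
    and a_eq: "\<And>i. real_of_int (a $ i) = c * (if i \<in> {j} then 1 else 0)"
    and "real_of_int \<alpha> = c * real 1"
    using tight_card_const_imp_indicator[of "{j}" 1] by blast
  then have \<alpha>: "real_of_int \<alpha> = c"
    by simp
  show False
  proof (cases "0 < c")
    case True
    have "real_of_int (weight (- {j})) = 0"
      using weight_multiple_indicator[OF a_eq, of "- {j}"] by simp
    then show False
      using weight_ge_if_covers[OF covers_Compl_singleton[of j]] \<alpha> True by linarith
  next
    case False
    then have "c < 0"
      using \<open>c \<noteq> 0\<close> by simp
    then have "pos_multiple a \<alpha> (\<chi> i. if i = j then -1 else 0) (-1)"
      using a_eq \<alpha> unfolding pos_multiple_def by (intro exI[of _ "- c"]) auto
    then show False
      using not_boolean unfolding is_boolean_facet_def by blast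
  qed
qed

lemma exists_tight_two_in_window:
  "\<exists>S j1 j2. tight S \<and> t \<le> j1 \<and> j1 < j2 \<and> j2 < t + int k \<and> pos j1 \<in> S \<and> pos j2 \<in> S"
proof (rule ccontr)
  assume "\<not> ?thesis"
  then have "card (S \<inter> cycC idx k (pos t)) = 1" if "tight S" for S
    using that unfolding tight_def covers_def by (intro card_inter_cycC_eq_1) blast+
  moreover have "cycC idx k (pos t) \<noteq> {}"
    using two_le_card_cycC[OF two_le_k, of t] by auto
  ultimately obtain c where "c \<noteq> 0"
    and a_eq: "\<And>i. real_of_int (a $ i) = c * (if i \<in> cycC idx k (pos t) then 1 else 0)"
    and "real_of_int \<alpha> = c * real 1"
    using tight_card_const_imp_indicator[of "cycC idx k (pos t)" 1] by blast
  then have \<alpha>: "real_of_int \<alpha> = c"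
    by simp
  show False
  proof (cases "0 < c")
    case True
    then have "pos_multiple a \<alpha> (\<chi> i. if i \<in> cycC idx k (pos t) then 1 else 0) 1"
      using a_eq \<alpha> unfolding pos_multiple_def by (intro exI[of _ c]) auto
    then show False
      using not_boolean unfolding is_boolean_facet_def by blast
  next
    case False
    then have "c * real (card (cycC idx k (pos t))) \<le> c * 2"
      using two_le_card_cycC[OF two_le_k, of t] by (intro mult_left_mono_neg) simp_all
    moreover have "real_of_int (weight UNIV) = c * real (card (cycC idx k (pos t)))"
      using weight_multiple_indicator[OF a_eq, of UNIV] by simp
    ultimately show False
      using weight_ge_if_covers[OF covers_UNIV] \<alpha> \<open>c \<noteq> 0\<close> False by linarith
  qed
qed

lemma coeff_nonneg: "0 \<le> a $ j"
proof -
  obtain S where S: "tight S" "j \<notin> S"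
    using exists_tight_not_mem by blast
  then have "covers (insert j S)"
    unfolding tight_def covers_def by (blast intro: hits_mono)
  then have "\<alpha> \<le> a $ j + weight S"
    using weight_ge_if_covers weight_insert[OF S(2)] by metis
  then show ?thesis
    using S(1) unfolding tight_def by simp
qed

lemma weight_Un_le: "weight (A \<union> B) \<le> weight A + weight B"
proof -
  have "0 \<le> weight (A \<inter> B)"
    unfolding weight_def using coeff_nonneg by (simp add: sum_nonneg)
  then show ?thesis
    unfolding weight_def using sum_Un[of A B "\<lambda>j. a $ j"] by simp
qed

definition sole_hit :: "'n set \<Rightarrow> int \<Rightarrow> int \<Rightarrow> bool" where
  "sole_hit S x t \<longleftrightarrow> t \<le> x \<and> x < t + int k \<and> \<not> hits (S - {pos x}) t"

lemma tight_exchange: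
  assumes "tight S" "pos x \<in> S" and R: "\<And>t. sole_hit S x t \<Longrightarrow> hits R t"
  shows "a $ pos x \<le> weight R"
proof -
  have "hits (R \<union> (S - {pos x})) t" for t
  proof -
    obtain j where j: "t \<le> j" "j < t + int k" "pos j \<in> S"
      using \<open>tight S\<close> unfolding tight_def covers_def hits_def by blast
    show ?thesis
    proof (cases "pos j = pos x")
      case False
      then show ?thesis
        using j by (intro hitsI[of t j]) auto
    next
      case True
      then obtain c where "j = x + c * int CARD('n)"
        by (rule pos_eq_posE)
      then have "hits (S - {pos x}) (t - c * int CARD('n)) \<or> hits R (t - c * int CARD('n))"
        using j R[of "t - c * int CARD('n)"] unfolding sole_hit_def by auto
      then have "hits (R \<union> (S - {pos x})) (t - c * int CARD('n))"
        by (meson hits_mono Un_upper1 Un_upper2)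
      then show ?thesis
        using hits_add_period[of _ "t - c * int CARD('n)" c] by simp
    qed
  qed
  then have "\<alpha> \<le> weight (R \<union> (S - {pos x}))"
    by (simp add: weight_ge_if_covers covers_def)
  also have "\<dots> \<le> weight R + weight (S - {pos x})"
    by (rule weight_Un_le)
  also have "\<dots> = weight R + \<alpha> - a $ pos x"
    using assms(1,2) by (simp add: weight_Diff_singleton tight_def)
  finally show ?thesis by simp
qed

lemma tight_exchange_left:
  assumes "tight S" "pos j1 \<in> S" "pos j2 \<in> S" "j1 < j2" "j2 < j1 + int k"
    and "j2 - int k \<le> y" "y \<le> j1"
  shows "a $ pos j1 \<le> a $ pos y"
proof -
  have "pos j2 \<noteq> pos j1"
    using assms(4,5) k_less by (intro pos_neq) simp_all
  have "a $ pos j1 \<le> weight {pos y}"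
  proof (rule tight_exchange[OF assms(1,2)])
    fix t
    assume "sole_hit S j1 t"
    then have "j1 < t + int k" "t + int k \<le> j2"
      using assms(3,4) \<open>pos j2 \<noteq> pos j1\<close> unfolding sole_hit_def hits_def by force+
    then show "hits {pos y} t"
      using assms(6,7) by (intro hitsI[of t y]) auto
  qed
  then show ?thesis
    by (simp add: weight_def)
qed

lemma tight_exchange_right:
  assumes "tight S" "pos j1 \<in> S" "pos j2 \<in> S" "j1 < j2" "j2 < j1 + int k"
    and "j2 \<le> y" "y \<le> j1 + int k"
  shows "a $ pos j2 \<le> a $ pos y"
proof -
  have "pos j1 \<noteq> pos j2"
    using assms(4,5) k_less by (intro pos_neq[symmetric]) simp_all
  have "a $ pos j2 \<le> weight {pos y}"
  proof (rule tight_exchange[OF assms(1,3)])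
    fix t
    assume "sole_hit S j2 t"
    then have "j1 < t" "t \<le> j2"
      using assms(2,4) \<open>pos j1 \<noteq> pos j2\<close> unfolding sole_hit_def hits_def by force+
    then show "hits {pos y} t"
      using assms(6,7) by (intro hitsI[of t y]) auto
  qed
  then show ?thesis
    by (simp add: weight_def)
qed

definition min_coeff :: int where
  "min_coeff = Min (range (\<lambda>j. a $ j))"

definition minimal_at :: "int \<Rightarrow> bool" where
  "minimal_at j \<longleftrightarrow> a $ pos j = min_coeff"

lemma min_coeff_le: "min_coeff \<le> a $ j"
  unfolding min_coeff_def by (rule Min_le) simp_all

lemma minimal_at_iff_le: "minimal_at j \<longleftrightarrow> a $ pos j \<le> min_coeff"
  unfolding minimal_at_def using min_coeff_le[of "pos j"] by linarith

lemma exists_minimal_at_in_period: "\<exists>j. t \<le> j \<and> j < t + int CARD('n) \<and> minimal_at j"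
proof -
  have "min_coeff \<in> range (\<lambda>j. a $ j)"
    unfolding min_coeff_def by (rule Min_in) simp_all
  then obtain m where "a $ m = min_coeff"
    by auto
  then show ?thesis
    using pos_in_period[of t m] unfolding minimal_at_def by auto
qed

lemma first_minimal_at_from:
  obtains v where "t \<le> v" "minimal_at v" "\<And>j. t \<le> j \<Longrightarrow> j < v \<Longrightarrow> \<not> minimal_at j"
proof -
  define M where "M = {j. t \<le> j \<and> j < t + int CARD('n) \<and> minimal_at j}"
  have "finite M" "M \<noteq> {}"
    using exists_minimal_at_in_period[of t]
    by (auto simp: M_def intro: finite_subset[of _ "{t..<t + int CARD('n)}"])
  then have "Min M \<in> M" and Min_le: "\<And>j. j \<in> M \<Longrightarrow> Min M \<le> j"
    by simp_all
  show ?thesis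
  proof (rule that[of "Min M"])
    show "t \<le> Min M" "minimal_at (Min M)"
      using \<open>Min M \<in> M\<close> by (simp_all add: M_def)
    fix j
    assume j: "t \<le> j" "j < Min M"
    show "\<not> minimal_at j"
    proof
      assume "minimal_at j"
      then have "j \<in> M"
        using j \<open>Min M \<in> M\<close> by (simp add: M_def)
      then show False
        using Min_le j(2) by fastforce
    qed
  qed
qed

lemma last_minimal_at_before:
  obtains u where "u < t" "minimal_at u" "\<And>j. u < j \<Longrightarrow> j < t \<Longrightarrow> \<not> minimal_at j"
proof -
  define M where "M = {j. t - int CARD('n) \<le> j \<and> j < t \<and> minimal_at j}"
  have "finite M" "M \<noteq> {}"
    using exists_minimal_at_in_period[of "t - int CARD('n)"]
    by (auto simp: M_def intro: finite_subset[of _ "{t - int CARD('n)..<t}"])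
  then have "Max M \<in> M" and le_Max: "\<And>j. j \<in> M \<Longrightarrow> j \<le> Max M"
    by simp_all
  show ?thesis
  proof (rule that[of "Max M"])
    show "Max M < t" "minimal_at (Max M)"
      using \<open>Max M \<in> M\<close> by (simp_all add: M_def)
    fix j
    assume j: "Max M < j" "j < t"
    show "\<not> minimal_at j"
    proof
      assume "minimal_at j"
      then have "j \<in> M"
        using j \<open>Max M \<in> M\<close> by (simp add: M_def)
      then show False
        using le_Max j(1) by fastforce
    qed
  qed
qed

lemma tight_pair_before_minimal_at:
  assumes "minimal_at v"
  obtains S j1 j2 where "tight S" "v - int k \<le> j1" "j1 < j2" "j2 < v" "pos j1 \<in> S" "pos j2 \<in> S"
    "minimal_at j2"
proof -
  obtain S j1 j2 where S: "tight S" "v - int k \<le> j1" "j1 < j2" "j2 < v" "pos j1 \<in> S" "pos j2 \<in> S"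
    using exists_tight_two_in_window[of "v - int k"] by auto
  then have "a $ pos j2 \<le> a $ pos v"
    by (intro tight_exchange_right[of S j1]) simp_all
  then show ?thesis
    using assms S by (intro that[of S j1 j2]) (simp_all add: minimal_at_iff_le minimal_at_def)
qed

lemma two_minimal_at_in_window:
  "\<exists>j1 j2. t \<le> j1 \<and> j1 < j2 \<and> j2 < t + int k \<and> minimal_at j1 \<and> minimal_at j2"
proof (rule ccontr)
  assume "\<not> ?thesis"
  then have at_most_one: False
    if "t \<le> j" "j < j'" "j' < t + int k" "minimal_at j" "minimal_at j'" for j j'
    using that by blast
  obtain v where v: "t + int k \<le> v" "minimal_at v"
    and before_v: "\<And>j. t + int k \<le> j \<Longrightarrow> j < v \<Longrightarrow> \<not> minimal_at j"
    by (rule first_minimal_at_from[of "t + int k"]) blast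
  have few: False
    if "v - int k \<le> j" "j < j'" "j' < v" "minimal_at j" "minimal_at j'" for j j'
    using that at_most_one[of j j'] before_v[of j'] v(1) by linarith
  obtain S j1 j2 where S: "tight S" "v - int k \<le> j1" "j1 < j2" "j2 < v" "pos j1 \<in> S" "pos j2 \<in> S"
    and "minimal_at j2"
    using tight_pair_before_minimal_at[OF v(2)] by blast
  then have "\<not> minimal_at j1"
    using few[of j1 j2] S by blast
  have "\<not> minimal_at w" if "j2 - int k \<le> w" "w < j2" for w
  proof (cases "w \<le> j1")
    case True
    show ?thesis
    proof
      assume "minimal_at w"
      moreover have "a $ pos j1 \<le> a $ pos w"
        using S that True by (intro tight_exchange_left[of S j1 j2]) simp_all
      ultimately show False
        using \<open>\<not> minimal_at j1\<close> by (simp add: minimal_at_iff_le minimal_at_def)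
    qed
  next
    case False
    then show ?thesis
      using few[of w j2] S that \<open>minimal_at j2\<close> by auto
  qed
  then show False
    using tight_pair_before_minimal_at[OF \<open>minimal_at j2\<close>] by (metis less_imp_le order.trans)
qed

lemma two_le_card_cycC_inter_minimal: "2 \<le> card (cycC idx k i \<inter> {j. a $ j \<le> min_coeff})"
proof -
  obtain j1 j2 where j: "int (idx i) \<le> j1" "j1 < j2" "j2 < int (idx i) + int k"
    "minimal_at j1" "minimal_at j2"
    using two_minimal_at_in_window by blast
  then have "pos j1 \<noteq> pos j2"
    using k_less by (intro pos_neq[symmetric]) simp_all
  moreover have "{pos j1, pos j2} \<subseteq> cycC idx k i \<inter> {j. a $ j \<le> min_coeff}"
    using j cycC_pos[of "int (idx i)"] by (auto simp: minimal_at_def)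
  ultimately show ?thesis
    using card_mono[of "cycC idx k i \<inter> {j. a $ j \<le> min_coeff}" "{pos j1, pos j2}"] by simp
qed

lemma minimal_pair_hitting_windows:
  assumes "hi < lo + int k"
    and none: "\<And>y. hi \<le> y \<Longrightarrow> y < lo + int k \<Longrightarrow> \<not> minimal_at y"
  obtains u v where "minimal_at u" "minimal_at v"
    "\<And>t. lo \<le> t \<Longrightarrow> t \<le> hi \<Longrightarrow> hits {pos u, pos v} t"
proof -
  obtain u where u: "u < hi" "minimal_at u"
    and after_u: "\<And>j. u < j \<Longrightarrow> j < hi \<Longrightarrow> \<not> minimal_at j"
    by (rule last_minimal_at_before[of hi]) blast
  obtain v where v: "lo + int k \<le> v" "minimal_at v"
    and before_v: "\<And>j. lo + int k \<le> j \<Longrightarrow> j < v \<Longrightarrow> \<not> minimal_at j"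
    by (rule first_minimal_at_from[of "lo + int k"]) blast
  (* a minimal position in (u, u + k] lies beyond hi, hence beyond lo + k *)
  obtain e where e: "u + 1 \<le> e" "e < u + 1 + int k" "minimal_at e"
    using two_minimal_at_in_window[of "u + 1"] by auto
  have "hi \<le> e"
    using after_u[of e] e by linarith
  then have "lo + int k \<le> e"
    using none[of e] e by linarith
  then have "v \<le> u + int k"
    using before_v[of e] e by linarith
  have "hits {pos u, pos v} t" if "lo \<le> t" "t \<le> hi" for t
  proof (cases "t \<le> u")
    case True
    then show ?thesis
      using that u(1) assms(1) by (intro hitsI[of t u]) auto
  next
    case False
    then show ?thesis
      using that v(1) \<open>v \<le> u + int k\<close> assms(1) by (intro hitsI[of t v]) auto
  qed
  with u v show ?thesis
    using that by blast
qed

lemma coeff_le_twice_min: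
  assumes "min_coeff < a $ i"
  shows "a $ i \<le> 2 * min_coeff"
proof -
  obtain S where S: "tight S" "i \<in> S"
    using exists_tight_mem by blast
  define x where "x = int (idx i)"
  then have "pos x \<in> S"
    using S(2) by simp
  define P where "P = {t. sole_hit S x t}"
  have no_common_minimum: "\<not> minimal_at y" if "\<And>t. t \<in> P \<Longrightarrow> t \<le> y \<and> y < t + int k" for y
  proof
    assume "minimal_at y"
    have "a $ pos x \<le> weight {pos y}"
      using that unfolding P_def by (intro tight_exchange[OF S(1) \<open>pos x \<in> S\<close>]) (auto intro: hitsI)
    then show False
      using assms \<open>minimal_at y\<close> by (simp add: weight_def minimal_at_def x_def)
  qed
  have "P \<noteq> {}"
    using no_common_minimum exists_minimal_at_in_period[of 0] by blast
  moreover have "finite P"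
    by (rule finite_subset[of _ "{x - int k..x}"]) (auto simp: P_def sole_hit_def)
  ultimately have P: "Min P \<in> P" "Max P \<in> P" "\<And>t. t \<in> P \<Longrightarrow> Min P \<le> t \<and> t \<le> Max P"
    by simp_all
  then have "Max P < Min P + int k"
    unfolding P_def sole_hit_def by auto
  moreover have "\<not> minimal_at y" if "Max P \<le> y" "y < Min P + int k" for y
    using that P(3) by (intro no_common_minimum) force
  ultimately obtain u v where uv: "minimal_at u" "minimal_at v"
    and hits: "\<And>t. Min P \<le> t \<Longrightarrow> t \<le> Max P \<Longrightarrow> hits {pos u, pos v} t"
    using minimal_pair_hitting_windows[of "Max P" "Min P"] by blast
  have "a $ pos x \<le> weight {pos u, pos v}"
    using hits P(3) unfolding P_def by (intro tight_exchange[OF S(1) \<open>pos x \<in> S\<close>]) blast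
  also have "\<dots> \<le> weight {pos u} + weight {pos v}"
    by (metis insert_is_Un weight_Un_le)
  also have "\<dots> = 2 * min_coeff"
    using uv by (simp add: weight_def minimal_at_def)
  finally show ?thesis
    by (simp add: x_def)
qed

end

theorem mainTheorem2:
  fixes idx :: "'n::finite \<Rightarrow> nat" and k :: nat and a :: "int^'n" and \<alpha> :: int
  assumes "is_labelling idx"
    and "1 \<le> k" and "k \<le> CARD('n) - 1"
    and "facet_defining (Qcov idx k) a \<alpha>"
    and "\<not> is_boolean_facet idx k a \<alpha>"
    and "\<not> is_rank_constraint k a \<alpha>"
  shows "(\<forall>i. card (cycC idx k i \<inter> - {j. a$j > Min (range (\<lambda>l. a$l))}) \<ge> 2)
       \<and> (\<forall>i\<in>{j. a$j > Min (range (\<lambda>l. a$l))}. a$i \<le> 2 * Min (range (\<lambda>l. a$l)))"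
proof -
  interpret nonboolean_facet idx k a \<alpha>
    using assms(1-5) by unfold_locales simp_all
  have "- {j. min_coeff < a $ j} = {j. a $ j \<le> min_coeff}"
    by auto
  then show ?thesis
    unfolding min_coeff_def[symmetric]
    using two_le_card_cycC_inter_minimal coeff_le_twice_min by auto
qed

end
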